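(* Consider the Galton–Watson process with types $\{1,2,\dots\}$ and progeny generating functions $P_i(\boldsymbol s)=\tfrac{19}{30}s_{i+1}^3+\tfrac{11}{30}$ for $i\ne10$ and $P_{10}(\boldsymbol s)=\tfrac25 s_{10}^4+\tfrac15 s_{11}^4+\tfrac25$. Then $\bar\nu=\lim_{k\to\infty}\mathrm{sp}(M^{(k)})=1.6>1$, and the partial extinction probabilities satisfy $\tilde q_i<1$ for $1\le i\le10$ and $\tilde q_i=1$ for $i\ge11$.
   Context: A Galton–Watson process with types $\{1,2,\dots\}$ is $\{\mathcal Z_n=(Z_{n1},Z_{n2},\dots)\}$, $Z_{n\ell}$ the number of type-$\ell$ individuals in generation $n$, started from one individual of type $\varphi_0$; $P_i(\boldsymbol s)$ is the probability generating function of the offspring vector of a type-$i$ individual, $M_{ij}=\partial P_i/\partial s_j|_{\boldsymbol s=\boldsymbol 1}$, $M^{(k)}=(M_{ij})_{1\le i,j\le k}$, and $\mathrm{sp}$ is the spectral radius. Partial extinction: $\tilde q_i=\mathbb P[\forall\ell:\lim_n Z_{n\ell}=0\mid\varphi_0=i]$. *)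

theory Defs
  imports "HOL-Probability.Probability" "Jordan_Normal_Form.Spectral_Radius"
begin

text \<open>Types are the positive integers 1,2,...; a population (generation) is a
  function nat => nat giving the number of individuals of each type
  (index 0 is never used by the process started from a type >= 1).\<close>

definition unit_vec :: "nat \<Rightarrow> nat \<Rightarrow> nat \<Rightarrow> nat" where
  "unit_vec c j = (\<lambda>l. if l = j then c else 0)"

text \<open>Offspring distribution of a type-i individual, read off from the
  progeny generating functions
  P_i(s) = 19/30 s_{i+1}^3 + 11/30 (i ~= 10),
  P_10(s) = 2/5 s_10^4 + 1/5 s_11^4 + 2/5.\<close>
definition offspring :: "nat \<Rightarrow> (nat \<Rightarrow> nat) pmf" where
  "offspring i =
     (if i = 10 then pmf_of_list [(unit_vec 4 10, 2/5), (unit_vec 4 11, 1/5), (\<lambda>_. 0, 2/5)]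
      else pmf_of_list [(unit_vec 3 (i+1), 19/30), (\<lambda>_. 0, 11/30)])"

definition conv_pmf :: "(nat \<Rightarrow> nat) pmf \<Rightarrow> (nat \<Rightarrow> nat) pmf \<Rightarrow> (nat \<Rightarrow> nat) pmf" where
  "conv_pmf p q = bind_pmf p (\<lambda>a. map_pmf (\<lambda>b. (\<lambda>l. a l + b l)) q)"

fun conv_pow :: "nat \<Rightarrow> (nat \<Rightarrow> nat) pmf \<Rightarrow> (nat \<Rightarrow> nat) pmf" where
  "conv_pow 0 p = return_pmf (\<lambda>_. 0)"
| "conv_pow (Suc c) p = conv_pmf (conv_pow c p) p"

fun gen_pmf :: "nat \<Rightarrow> (nat \<Rightarrow> nat) \<Rightarrow> (nat \<Rightarrow> nat) pmf" where
  "gen_pmf 0 z = return_pmf (\<lambda>_. 0)"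
| "gen_pmf (Suc N) z = conv_pmf (gen_pmf N z) (conv_pow (z N) (offspring N))"

definition GW_kernel :: "(nat \<Rightarrow> nat) \<Rightarrow> (nat \<Rightarrow> nat) pmf" where
  "GW_kernel z = gen_pmf (LEAST N. \<forall>l\<ge>N. z l = 0) z"

definition is_GW_process :: "'a measure \<Rightarrow> (nat \<Rightarrow> 'a \<Rightarrow> nat \<Rightarrow> nat) \<Rightarrow> nat \<Rightarrow> bool" where
  "is_GW_process M Z i \<longleftrightarrow>
     prob_space M \<and>
     (\<forall>n. Z n \<in> measurable M (count_space UNIV)) \<and>
     (AE \<omega> in M. Z 0 \<omega> = unit_vec 1 i) \<and>
     (\<forall>n (h :: nat \<Rightarrow> nat \<Rightarrow> nat) z.
        measure M {\<omega> \<in> space M. (\<forall>m\<le>n. Z m \<omega> = h m) \<and> Z (Suc n) \<omega> = z}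
        = measure M {\<omega> \<in> space M. \<forall>m\<le>n. Z m \<omega> = h m} * pmf (GW_kernel (h n)) z)"

text \<open>Mean matrix M_ij = dP_i/ds_j (1) = expected number of type-j children of a type-i individual.\<close>
definition mean_matrix :: "nat \<Rightarrow> nat \<Rightarrow> real" where
  "mean_matrix i j = measure_pmf.expectation (offspring i) (\<lambda>v. real (v j))"

text \<open>Truncation M^(k) = (M_ij)_{1<=i,j<=k}, as a complex k x k matrix.\<close>
definition trunc_mean :: "nat \<Rightarrow> complex mat" where
  "trunc_mean k = mat k k (\<lambda>(i, j). complex_of_real (mean_matrix (i+1) (j+1)))"

definition partial_extinction :: "'a measure \<Rightarrow> (nat \<Rightarrow> 'a \<Rightarrow> nat \<Rightarrow> nat) \<Rightarrow> 'a set" where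
  "partial_extinction M Z = {\<omega> \<in> space M. \<forall>l. (\<lambda>n. Z n \<omega> l) \<longlonglongrightarrow> 0}"

end

theory Submission
  imports Defs
begin

text \<open>The truncated mean matrices are upper triangular, and their only nonzero diagonal entry is
  M(10,10) = 8/5. A type-j individual has children of type j+1 only, except that type 10 also has
  children of type 10. Started from type i \<ge> 11, generation n therefore consists of type i+n
  alone, so every type dies out. Started from type i \<le> 10, with positive probability generation
  10-i consists of 3^(10-i) individuals of type 10. The generating functions at the point with
  s(10) = 9/10 and all other coordinates 1 satisfy P(j)(s) \<le> 1 and P(10)(s) \<le> 9/10, so
  (9/10)^Z(n,10) is a supermartingale. Its expectation, an upper bound for P(Z(n,10) = 0), is
  therefore below some c < 1 from time 10-i on, and so is the probability that type 10 eventually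
  dies out.\<close>

lemma unit_vec_apply [simp]: "unit_vec c j l = (if l = j then c else 0)"
  by (simp add: unit_vec_def)

lemma unit_vec_eq_zero_iff [simp]:
  "unit_vec c j = (\<lambda>_. 0) \<longleftrightarrow> c = 0" "(\<lambda>_. 0) = unit_vec c j \<longleftrightarrow> c = 0"
  by (auto simp: fun_eq_iff)

lemma unit_vec_inj: "c > 0 \<Longrightarrow> j \<noteq> k \<Longrightarrow> unit_vec c j \<noteq> unit_vec c k"
  by (auto simp: fun_eq_iff dest: spec[of _ j])

lemma pmf_of_list_wf_offspring_10:
  "pmf_of_list_wf [(unit_vec 4 10, 2/5::real), (unit_vec 4 11, 1/5), (\<lambda>_. 0::nat, 2/5)]"
  by (rule pmf_of_list_wfI) auto

lemma pmf_of_list_wf_offspring: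
  "pmf_of_list_wf [(unit_vec 3 (i+1), 19/30::real), (\<lambda>_. 0::nat, 11/30)]"
  by (rule pmf_of_list_wfI) auto

lemma set_pmf_offspring: "set_pmf (offspring i) =
  (if i = 10 then {unit_vec 4 10, unit_vec 4 11, \<lambda>_. 0} else {unit_vec 3 (i+1), \<lambda>_. 0})"
proof -
  have "set_pmf (pmf_of_list [(unit_vec 4 10, 2/5::real), (unit_vec 4 11, 1/5), (\<lambda>_. 0::nat, 2/5)])
      = {unit_vec 4 10, unit_vec 4 11, \<lambda>_. 0}"
    by (subst set_pmf_of_list_eq[OF pmf_of_list_wf_offspring_10]) auto
  moreover have "set_pmf (pmf_of_list [(unit_vec 3 (i+1), 19/30::real), (\<lambda>_. 0::nat, 11/30)])
      = {unit_vec 3 (i+1), \<lambda>_. 0}"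
    by (subst set_pmf_of_list_eq[OF pmf_of_list_wf_offspring]) auto
  ultimately show ?thesis
    unfolding offspring_def by simp
qed

lemma pmf_offspring_10:
  "pmf (offspring 10) (unit_vec 4 10) = 2/5" "pmf (offspring 10) (unit_vec 4 11) = 1/5"
  "pmf (offspring 10) (\<lambda>_. 0) = 2/5"
  unfolding offspring_def using pmf_of_list_wf_offspring_10 unit_vec_inj[of 4 10 11]
  by (simp_all add: pmf_pmf_of_list eq_commute[of "unit_vec 4 11"])

lemma pmf_offspring:
  assumes "i \<noteq> 10"
  shows "pmf (offspring i) (unit_vec 3 (Suc i)) = 19/30" "pmf (offspring i) (\<lambda>_. 0) = 11/30"
  unfolding offspring_def using assms pmf_of_list_wf_offspring[of i]
  by (simp_all add: pmf_pmf_of_list)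

lemma nn_integral_offspring_10:
  "(\<integral>\<^sup>+v. f v \<partial>offspring 10) =
     ennreal (2/5) * f (unit_vec 4 10) + ennreal (1/5) * f (unit_vec 4 11) + ennreal (2/5) * f (\<lambda>_. 0)"
proof -
  have "(\<integral>\<^sup>+v. f v \<partial>offspring 10) = (\<Sum>v\<in>set_pmf (offspring 10). f v * ennreal (pmf (offspring 10) v))"
    by (rule nn_integral_measure_pmf_finite) (simp_all add: set_pmf_offspring)
  then show ?thesis
    using unit_vec_inj[of 4 10 11] by (simp add: set_pmf_offspring pmf_offspring_10 mult.commute add_ac)
qed

lemma expectation_offspring:
  fixes f :: "(nat \<Rightarrow> nat) \<Rightarrow> real"
  shows "measure_pmf.expectation (offspring i) f =
    (if i = 10 then 2/5 * f (unit_vec 4 10) + 1/5 * f (unit_vec 4 11) + 2/5 * f (\<lambda>_. 0)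
     else 19/30 * f (unit_vec 3 (i+1)) + 11/30 * f (\<lambda>_. 0))"
proof -
  have "measure_pmf.expectation (offspring i) f = (\<Sum>v\<in>set_pmf (offspring i). pmf (offspring i) v *\<^sub>R f v)"
    by (rule integral_measure_pmf) (simp_all add: set_pmf_offspring)
  then show ?thesis
    using unit_vec_inj[of 4 10 11]
    by (cases "i = 10") (simp_all add: set_pmf_offspring pmf_offspring_10 pmf_offspring add_ac)
qed

lemma mean_matrix_eq: "mean_matrix i j =
  (if i = 10 then (if j = 10 then 8/5 else if j = 11 then 4/5 else 0)
   else if j = i + 1 then 19/10 else 0)"
  unfolding mean_matrix_def expectation_offspring by auto

lemma trunc_mean_carrier: "trunc_mean k \<in> carrier_mat k k"
  by (simp add: trunc_mean_def)

lemma upper_triangular_trunc_mean: "upper_triangular (trunc_mean k)"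
  by (rule upper_triangularI) (auto simp: trunc_mean_def mean_matrix_eq)

lemma spectrum_trunc_mean: "spectrum (trunc_mean k) = (\<lambda>i. if i = 9 then 8/5 else 0) ` {..<k}"
proof -
  have "spectrum (trunc_mean k) = {x. poly (char_poly (trunc_mean k)) x = 0}"
    by (rule spectrum_root_char_poly[OF trunc_mean_carrier])
  also have "\<dots> = set (diag_mat (trunc_mean k))"
    unfolding char_poly_upper_triangular[OF trunc_mean_carrier upper_triangular_trunc_mean]
      poly_prod_list_zero_iff
    by auto
  also have "\<dots> = (\<lambda>i. if i = 9 then 8/5 else 0) ` {..<k}"
    by (auto simp: diag_mat_def trunc_mean_def mean_matrix_eq)
  finally show ?thesis .
qed

lemma spectral_radius_trunc_mean:
  assumes "k \<ge> 10"
  shows "spectral_radius (trunc_mean k) = 8/5"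
proof -
  have "(\<lambda>i. if i = 9 then 8/5 else (0::complex)) ` {..<k} = {8/5, 0}"
    using assms by (auto simp: image_def intro: exI[of _ 0])
  then show ?thesis
    unfolding spectral_radius_def spectrum_trunc_mean by simp
qed

lemma spectral_radius_trunc_mean_limit: "(\<lambda>k. spectral_radius (trunc_mean k)) \<longlonglongrightarrow> 8/5"
  by (rule LIMSEQ_offset[where k = 10]) (simp add: spectral_radius_trunc_mean)

lemma set_pmf_conv_pmf:
  "set_pmf (conv_pmf p q) = {(\<lambda>l. a l + b l) | a b. a \<in> set_pmf p \<and> b \<in> set_pmf q}"
  by (auto simp: conv_pmf_def)

lemma conv_pmf_return_zero [simp]: "conv_pmf (return_pmf (\<lambda>_. 0)) p = p"
  by (simp add: conv_pmf_def bind_return_pmf map_pmf_ident)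

lemma set_pmf_conv_pow_closed:
  assumes "Q (\<lambda>_. 0)" "\<And>a b. Q a \<Longrightarrow> Q b \<Longrightarrow> Q (\<lambda>l. a l + b l)" "\<And>v. v \<in> set_pmf p \<Longrightarrow> Q v"
  shows "v \<in> set_pmf (conv_pow c p) \<Longrightarrow> Q v"
  using assms by (induction c arbitrary: v) (auto simp: set_pmf_conv_pmf)

lemma set_pmf_gen_pmf_closed:
  assumes "Q (\<lambda>_. 0)" "\<And>a b. Q a \<Longrightarrow> Q b \<Longrightarrow> Q (\<lambda>l. a l + b l)"
    and "\<And>j w. w \<in> set_pmf (conv_pow (z j) (offspring j)) \<Longrightarrow> Q w"
  shows "v \<in> set_pmf (gen_pmf N z) \<Longrightarrow> Q v"
  using assms by (induction N arbitrary: v) (auto simp: set_pmf_conv_pmf)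

lemma GW_kernel_child_type:
  assumes "v \<in> set_pmf (GW_kernel z)" "v l \<noteq> 0"
  obtains j where "z j \<noteq> 0" "l = Suc j \<or> (j = 10 \<and> l = 10)"
proof -
  let ?Q = "\<lambda>v. \<forall>l. v l \<noteq> 0 \<longrightarrow> (\<exists>j. z j \<noteq> 0 \<and> (l = Suc j \<or> (j = 10 \<and> l = 10)))"
  have "?Q v"
  proof (rule set_pmf_gen_pmf_closed[OF _ _ _ assms(1)[unfolded GW_kernel_def]])
    fix j w assume w: "w \<in> set_pmf (conv_pow (z j) (offspring j))"
    show "?Q w"
    proof (cases "z j = 0")
      case True
      then show ?thesis using w by simp
    next
      case False
      have "\<forall>l. w l \<noteq> 0 \<longrightarrow> l = Suc j \<or> (j = 10 \<and> l = 10)"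
        by (rule set_pmf_conv_pow_closed[OF _ _ _ w]) (auto simp: set_pmf_offspring split: if_splits)
      then show ?thesis using False by blast
    qed
  qed auto
  then show ?thesis using assms(2) that by blast
qed

lemma GW_kernel_finite_support:
  assumes z: "\<forall>l\<ge>N. z l = 0" and v: "v \<in> set_pmf (GW_kernel z)"
  shows "\<forall>l\<ge>Suc N. v l = 0"
proof (intro allI impI)
  fix l assume l: "Suc N \<le> l"
  show "v l = 0"
  proof (rule ccontr)
    assume "v l \<noteq> 0"
    then obtain j where j: "z j \<noteq> 0" "l = Suc j \<or> (j = 10 \<and> l = 10)"
      using GW_kernel_child_type[OF v] by blast
    then have "j < N" using z by (meson not_le)
    with j l show False by auto
  qed
qed

lemma GW_kernel_unit_vec_support:
  assumes "v \<in> set_pmf (GW_kernel (unit_vec c t))" "t \<noteq> 10"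
  shows "v = unit_vec (v (Suc t)) (Suc t)"
proof (rule ext)
  fix l
  have "v l = 0" if "l \<noteq> Suc t"
  proof (rule ccontr)
    assume "v l \<noteq> 0"
    then obtain j where "unit_vec c t j \<noteq> 0" "l = Suc j \<or> (j = 10 \<and> l = 10)"
      using GW_kernel_child_type[OF assms(1)] by blast
    with that assms(2) show False by (auto split: if_splits)
  qed
  then show "v l = unit_vec (v (Suc t)) (Suc t) l" by simp
qed

lemma gen_pmf_eq_return_zero: "(\<And>j. j < N \<Longrightarrow> z j = 0) \<Longrightarrow> gen_pmf N z = return_pmf (\<lambda>_. 0)"
  by (induction N) auto

lemma GW_kernel_unit_vec: "GW_kernel (unit_vec c t) = conv_pow c (offspring t)"
proof (cases "c = 0")
  case True
  then show ?thesis by (simp add: GW_kernel_def)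
next
  case False
  have "(LEAST N. \<forall>l\<ge>N. unit_vec c t l = 0) = Suc t"
  proof (rule Least_equality)
    show "Suc t \<le> N" if "\<forall>l\<ge>N. unit_vec c t l = 0" for N
      using that False by (cases "t < N") (auto dest: spec[of _ t])
  qed simp
  moreover have "gen_pmf t (unit_vec c t) = return_pmf (\<lambda>_. 0)"
    by (rule gen_pmf_eq_return_zero) simp
  ultimately show ?thesis by (simp add: GW_kernel_def)
qed

lemma unit_vec_in_set_pmf_conv_pow_offspring:
  "t \<noteq> 10 \<Longrightarrow> unit_vec (3 * c) (Suc t) \<in> set_pmf (conv_pow c (offspring t))"
proof (induction c)
  case 0
  then show ?case by (simp add: unit_vec_def)
next
  case (Suc c)
  have "unit_vec (3 * Suc c) (Suc t) = (\<lambda>l. unit_vec (3 * c) (Suc t) l + unit_vec 3 (Suc t) l)"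
    by (auto simp: fun_eq_iff)
  moreover have "unit_vec 3 (Suc t) \<in> set_pmf (offspring t)"
    using Suc.prems by (simp add: set_pmf_offspring)
  ultimately show ?case
    using Suc unfolding conv_pow.simps set_pmf_conv_pmf by blast
qed

subsection \<open>A generating function that the kernel does not increase\<close>

lemma nn_integral_conv_pmf_multiplicative:
  fixes \<phi> :: "(nat \<Rightarrow> nat) \<Rightarrow> ennreal"
  assumes "\<And>a b. \<phi> (\<lambda>l. a l + b l) = \<phi> a * \<phi> b"
  shows "(\<integral>\<^sup>+v. \<phi> v \<partial>conv_pmf p q) = (\<integral>\<^sup>+v. \<phi> v \<partial>p) * (\<integral>\<^sup>+v. \<phi> v \<partial>q)"
proof -
  have "(\<integral>\<^sup>+v. \<phi> v \<partial>conv_pmf p q) = (\<integral>\<^sup>+a. \<integral>\<^sup>+b. \<phi> a * \<phi> b \<partial>q \<partial>p)"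
    by (simp add: conv_pmf_def assms)
  also have "\<dots> = (\<integral>\<^sup>+a. \<phi> a * (\<integral>\<^sup>+v. \<phi> v \<partial>q) \<partial>p)"
    by (simp add: nn_integral_cmult)
  also have "\<dots> = (\<integral>\<^sup>+v. \<phi> v \<partial>p) * (\<integral>\<^sup>+v. \<phi> v \<partial>q)"
    by (simp add: nn_integral_multc)
  finally show ?thesis .
qed

lemma nn_integral_gen_pmf_multiplicative:
  fixes \<phi> :: "(nat \<Rightarrow> nat) \<Rightarrow> ennreal"
  assumes "\<And>a b. \<phi> (\<lambda>l. a l + b l) = \<phi> a * \<phi> b" and "\<phi> (\<lambda>_. 0) = 1"
  shows "(\<integral>\<^sup>+v. \<phi> v \<partial>gen_pmf N z) = (\<Prod>j<N. (\<integral>\<^sup>+v. \<phi> v \<partial>offspring j) ^ z j)"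
proof -
  have pow: "(\<integral>\<^sup>+v. \<phi> v \<partial>conv_pow c p) = (\<integral>\<^sup>+v. \<phi> v \<partial>p) ^ c" for c p
    by (induction c) (simp_all add: nn_integral_conv_pmf_multiplicative assms mult.commute)
  show ?thesis
    by (induction N) (simp_all add: nn_integral_conv_pmf_multiplicative assms pow)
qed

definition type10_weight :: "(nat \<Rightarrow> nat) \<Rightarrow> ennreal" where
  "type10_weight v = ennreal ((9/10) ^ v 10)"

lemma type10_weight_le_1: "type10_weight v \<le> 1"
  by (simp add: type10_weight_def power_le_one)

lemma nn_integral_offspring_type10_weight:
  "(\<integral>\<^sup>+v. type10_weight v \<partial>offspring j) \<le> (if j = 10 then ennreal (9/10) else 1)"
proof (cases "j = 10")
  case True
  have "(\<integral>\<^sup>+v. type10_weight v \<partial>offspring 10) = ennreal (2/5 * (9/10)^4 + 1/5 + 2/5)"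
    by (simp add: nn_integral_offspring_10 type10_weight_def ennreal_mult[symmetric]
        ennreal_plus[symmetric] del: ennreal_plus)
  also have "\<dots> \<le> ennreal (9/10)"
    by (rule ennreal_leI) (simp add: eval_nat_numeral)
  finally show ?thesis using True by simp
next
  case False
  have "(\<integral>\<^sup>+v. type10_weight v \<partial>offspring j) \<le> (\<integral>\<^sup>+v. 1 \<partial>offspring j)"
    by (rule nn_integral_mono) (rule type10_weight_le_1)
  then show ?thesis using False by simp
qed

lemma nn_integral_GW_kernel_type10_weight:
  assumes "\<exists>N. \<forall>l\<ge>N. z l = 0"
  shows "(\<integral>\<^sup>+v. type10_weight v \<partial>GW_kernel z) \<le> type10_weight z"
proof -
  define N where "N = (LEAST N. \<forall>l\<ge>N. z l = 0)"
  have N: "\<forall>l\<ge>N. z l = 0"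
    unfolding N_def using assms by (rule LeastI_ex)
  have "(\<integral>\<^sup>+v. type10_weight v \<partial>GW_kernel z) = (\<Prod>j<N. (\<integral>\<^sup>+v. type10_weight v \<partial>offspring j) ^ z j)"
    unfolding GW_kernel_def N_def[symmetric]
    by (rule nn_integral_gen_pmf_multiplicative) (simp_all add: type10_weight_def power_add ennreal_mult)
  also have "\<dots> \<le> (\<Prod>j<N. if j = 10 then ennreal (9/10) ^ z 10 else 1)"
  proof (rule prod_mono_ennreal)
    fix j
    show "(\<integral>\<^sup>+v. type10_weight v \<partial>offspring j) ^ z j \<le> (if j = 10 then ennreal (9/10) ^ z 10 else 1)"
      using nn_integral_offspring_type10_weight[of j] by (auto intro: power_mono power_le_one)
  qed
  also have "\<dots> \<le> type10_weight z"
    using N by (cases "10 < N") (simp_all add: prod.delta type10_weight_def ennreal_power)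
  finally show ?thesis .
qed

subsection \<open>Processes driven by a Markov kernel of probability mass functions\<close>

lemma nn_integral_indicator_partition_AE:
  fixes g :: "'a \<Rightarrow> ennreal"
  assumes I: "countable I" and F: "\<And>j. j \<in> I \<Longrightarrow> F j \<in> sets M"
    and disj: "disjoint_family_on F I" and g: "g \<in> borel_measurable M"
    and cover: "AE \<omega> in M. \<omega> \<in> B \<longleftrightarrow> (\<exists>j\<in>I. \<omega> \<in> F j)"
  shows "(\<integral>\<^sup>+\<omega>. g \<omega> * indicator B \<omega> \<partial>M) = (\<integral>\<^sup>+j. \<integral>\<^sup>+\<omega>. g \<omega> * indicator (F j) \<omega> \<partial>M \<partial>count_space I)"
proof -
  have "(\<integral>\<^sup>+\<omega>. g \<omega> * indicator B \<omega> \<partial>M) = (\<integral>\<^sup>+\<omega>. \<integral>\<^sup>+j. g \<omega> * indicator (F j) \<omega> \<partial>count_space I \<partial>M)"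
  proof (rule nn_integral_cong_AE)
    show "AE \<omega> in M. g \<omega> * indicator B \<omega> = (\<integral>\<^sup>+j. g \<omega> * indicator (F j) \<omega> \<partial>count_space I)"
      using cover
    proof eventually_elim
      case (elim \<omega>)
      have "(\<integral>\<^sup>+j. indicator (F j) \<omega> \<partial>count_space I) = (\<integral>\<^sup>+j. of_bool (\<omega> \<in> F j) \<partial>count_space I)"
        by (simp add: indicator_def)
      also have "\<dots> = of_bool (\<exists>j\<in>I. \<omega> \<in> F j)"
        using disj by (intro of_bool_Bex_eq_nn_integral[symmetric]) (auto simp: disjoint_family_on_def)
      also have "\<dots> = indicator B \<omega>"
        using elim by (simp add: indicator_def)
      finally show ?case
        by (simp add: nn_integral_cmult)
    qed
  qed
  also have "\<dots> = (\<integral>\<^sup>+j. \<integral>\<^sup>+\<omega>. g \<omega> * indicator (F j) \<omega> \<partial>M \<partial>count_space I)"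
    by (rule nn_integral_count_space_nn_integral[OF I]) (use F g in measurable)
  finally show ?thesis .
qed

text \<open>A trajectory up to time n is a function on all times that is undefined after n, so that
  it is determined by its values up to n.\<close>

fun trajectories :: "('s \<Rightarrow> 's pmf) \<Rightarrow> 's \<Rightarrow> nat \<Rightarrow> (nat \<Rightarrow> 's) set" where
  "trajectories K x0 0 = {(\<lambda>_. undefined)(0 := x0)}"
| "trajectories K x0 (Suc n) = (\<Union>h\<in>trajectories K x0 n. (\<lambda>z. h(Suc n := z)) ` set_pmf (K (h n)))"

fun reachable :: "('s \<Rightarrow> 's pmf) \<Rightarrow> 's \<Rightarrow> nat \<Rightarrow> 's set" where
  "reachable K x0 0 = {x0}"
| "reachable K x0 (Suc n) = (\<Union>x\<in>reachable K x0 n. set_pmf (K x))"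

lemma countable_trajectories: "countable (trajectories K x0 n)"
  by (induction n) auto

lemma trajectories_undefined: "h \<in> trajectories K x0 n \<Longrightarrow> n < m \<Longrightarrow> h m = undefined"
  by (induction n arbitrary: h) auto

lemma trajectories_Suc_intro:
  "h \<in> trajectories K x0 n \<Longrightarrow> z \<in> set_pmf (K (h n)) \<Longrightarrow> h(Suc n := z) \<in> trajectories K x0 (Suc n)"
  by (force simp: image_iff)

lemma trajectories_SucE:
  assumes "h \<in> trajectories K x0 (Suc n)"
  obtains h' z where "h' \<in> trajectories K x0 n" "z \<in> set_pmf (K (h' n))" "h = h'(Suc n := z)"
  using assms by auto

lemma reachable_eq_trajectories: "reachable K x0 n = (\<lambda>h. h n) ` trajectories K x0 n"
  by (induction n) (simp_all add: image_UN image_image)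

locale pmf_kernel_process = prob_space M for M :: "'a measure" +
  fixes K :: "'s \<Rightarrow> 's pmf" and x0 :: 's and X :: "nat \<Rightarrow> 'a \<Rightarrow> 's"
  assumes measurable_X [measurable]: "\<And>n. X n \<in> measurable M (count_space UNIV)"
    and AE_X_0: "AE \<omega> in M. X 0 \<omega> = x0"
    and measure_step: "\<And>n h z. measure M {\<omega> \<in> space M. (\<forall>m\<le>n. X m \<omega> = h m) \<and> X (Suc n) \<omega> = z}
        = measure M {\<omega> \<in> space M. \<forall>m\<le>n. X m \<omega> = h m} * pmf (K (h n)) z"
begin

definition cylinder :: "nat \<Rightarrow> (nat \<Rightarrow> 's) \<Rightarrow> 'a set" where
  "cylinder n h = {\<omega> \<in> space M. \<forall>m\<le>n. X m \<omega> = h m}"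

definition history :: "nat \<Rightarrow> 'a \<Rightarrow> nat \<Rightarrow> 's" where
  "history n \<omega> = (\<lambda>m. if m \<le> n then X m \<omega> else undefined)"

lemma borel_measurable_comp_X [measurable]: "(\<lambda>\<omega>. f (X n \<omega>)) \<in> borel_measurable M"
  by (rule measurable_compose[OF measurable_X]) simp

lemma measurable_comp_X [measurable]: "(\<lambda>\<omega>. f (X n \<omega>)) \<in> measurable M (count_space UNIV)"
  by (rule measurable_compose[OF measurable_X]) simp

lemma sets_cylinder [measurable]: "cylinder n h \<in> sets M"
  unfolding cylinder_def by measurable

lemma measure_cylinder_Suc:
  "measure M (cylinder (Suc n) (h(Suc n := z))) = measure M (cylinder n h) * pmf (K (h n)) z"
proof -
  have "cylinder (Suc n) (h(Suc n := z)) = {\<omega> \<in> space M. (\<forall>m\<le>n. X m \<omega> = h m) \<and> X (Suc n) \<omega> = z}"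
    by (auto simp: cylinder_def le_Suc_eq)
  then show ?thesis
    by (simp add: measure_step cylinder_def)
qed

lemma history_eq_iff_cylinder:
  "h \<in> trajectories K x0 n \<Longrightarrow> \<omega> \<in> space M \<Longrightarrow> history n \<omega> = h \<longleftrightarrow> \<omega> \<in> cylinder n h"
  using trajectories_undefined[of h K x0 n] by (auto simp: history_def cylinder_def fun_eq_iff)

lemma AE_cylinder_Suc_cover:
  "AE \<omega> in M. \<omega> \<in> cylinder n h \<longleftrightarrow> (\<exists>z\<in>set_pmf (K (h n)). \<omega> \<in> cylinder (Suc n) (h(Suc n := z)))"
proof -
  let ?S = "set_pmf (K (h n))" and ?C = "\<lambda>z. cylinder (Suc n) (h(Suc n := z))"
  have disj: "disjoint_family_on ?C ?S"
    by (fastforce simp: disjoint_family_on_def cylinder_def)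
  have sub: "(\<Union>z\<in>?S. ?C z) \<subseteq> cylinder n h"
    by (auto simp: cylinder_def)
  have "emeasure M (\<Union>z\<in>?S. ?C z) = (\<integral>\<^sup>+z. emeasure M (?C z) \<partial>count_space ?S)"
    by (rule emeasure_UN_countable[OF _ _ disj]) simp_all
  also have "\<dots> = (\<integral>\<^sup>+z. ennreal (measure M (cylinder n h)) * ennreal (pmf (K (h n)) z) \<partial>count_space ?S)"
    by (simp add: emeasure_eq_measure measure_cylinder_Suc ennreal_mult)
  also have "\<dots> = ennreal (measure M (cylinder n h)) * emeasure (K (h n)) ?S"
    by (simp add: nn_integral_cmult nn_integral_pmf)
  also have "emeasure (K (h n)) ?S = 1"
    by (rule measure_pmf.emeasure_eq_1_AE) (auto simp: AE_measure_pmf_iff)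
  also have "ennreal (measure M (cylinder n h)) * 1 = emeasure M (cylinder n h)"
    by (simp add: emeasure_eq_measure)
  finally have "emeasure M (\<Union>z\<in>?S. ?C z) = emeasure M (cylinder n h)" .
  moreover have sets_U: "(\<Union>z\<in>?S. ?C z) \<in> sets M"
    by (intro sets.countable_UN'') simp_all
  ultimately have "emeasure M (cylinder n h - (\<Union>z\<in>?S. ?C z)) = 0"
    using sub by (simp add: emeasure_Diff)
  then have "cylinder n h - (\<Union>z\<in>?S. ?C z) \<in> null_sets M"
    using sets_U by (intro null_setsI) auto
  from AE_not_in[OF this] show ?thesis
    by eventually_elim (use sub in blast)
qed

lemma AE_history_in_trajectories: "AE \<omega> in M. history n \<omega> \<in> trajectories K x0 n"
proof (induction n)
  case 0
  show ?case
    using AE_X_0 by eventually_elim (auto simp: history_def fun_eq_iff)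
next
  case (Suc n)
  have "AE \<omega> in M. \<forall>h\<in>trajectories K x0 n. \<omega> \<in> cylinder n h \<longleftrightarrow>
      (\<exists>z\<in>set_pmf (K (h n)). \<omega> \<in> cylinder (Suc n) (h(Suc n := z)))"
    by (subst AE_ball_countable[OF countable_trajectories]) (blast intro: AE_cylinder_Suc_cover)
  with Suc AE_space show ?case
  proof eventually_elim
    case (elim \<omega>)
    define h where "h = history n \<omega>"
    have h: "h \<in> trajectories K x0 n"
      using elim by (simp add: h_def)
    then have "\<omega> \<in> cylinder n h"
      using history_eq_iff_cylinder elim(2) h_def by blast
    with elim(3) h obtain z where z: "z \<in> set_pmf (K (h n))" "\<omega> \<in> cylinder (Suc n) (h(Suc n := z))"
      by blast
    then have "history (Suc n) \<omega> = h(Suc n := z)"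
      by (auto simp: h_def history_def cylinder_def fun_eq_iff dest: spec[of _ "Suc n"])
    with trajectories_Suc_intro[OF h z(1)] show ?case by metis
  qed
qed

lemma measure_cylinder_pos: "h \<in> trajectories K x0 n \<Longrightarrow> 0 < measure M (cylinder n h)"
proof (induction n arbitrary: h)
  case 0
  then have "cylinder 0 h = {\<omega> \<in> space M. X 0 \<omega> = x0}"
    by (auto simp: cylinder_def)
  moreover have "prob {\<omega> \<in> space M. X 0 \<omega> = x0} = 1"
    using AE_X_0 by (subst prob_Collect_eq_1) simp_all
  ultimately show ?case by simp
next
  case (Suc n)
  obtain h' z where h': "h' \<in> trajectories K x0 n" "z \<in> set_pmf (K (h' n))" "h = h'(Suc n := z)"
    using Suc.prems by (rule trajectories_SucE)
  then show ?case
    using Suc.IH[OF h'(1)] by (simp only: measure_cylinder_Suc) (simp add: pmf_positive)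
qed

lemma AE_X_reachable: "AE \<omega> in M. \<forall>n. X n \<omega> \<in> reachable K x0 n"
proof -
  have "AE \<omega> in M. \<forall>n. history n \<omega> \<in> trajectories K x0 n"
    by (simp add: AE_all_countable AE_history_in_trajectories)
  then show ?thesis
  proof eventually_elim
    case (elim \<omega>)
    show ?case
    proof
      fix n
      have "history n \<omega> n \<in> reachable K x0 n"
        using elim by (simp add: reachable_eq_trajectories)
      then show "X n \<omega> \<in> reachable K x0 n"
        by (simp add: history_def)
    qed
  qed
qed

lemma prob_reachable_pos:
  assumes "x \<in> reachable K x0 n"
  shows "0 < prob {\<omega> \<in> space M. X n \<omega> = x}"
proof -
  obtain h where h: "h \<in> trajectories K x0 n" "h n = x"
    using assms by (auto simp: reachable_eq_trajectories)
  have "measure M (cylinder n h) \<le> prob {\<omega> \<in> space M. X n \<omega> = x}"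
    using h(2) by (intro finite_measure_mono) (auto simp: cylinder_def)
  with measure_cylinder_pos[OF h(1)] show ?thesis by simp
qed

lemma nn_integral_split_trajectories:
  fixes f :: "'a \<Rightarrow> ennreal"
  assumes [measurable]: "f \<in> borel_measurable M"
  shows "(\<integral>\<^sup>+\<omega>. f \<omega> \<partial>M) =
    (\<integral>\<^sup>+h. \<integral>\<^sup>+\<omega>. f \<omega> * indicator (cylinder n h) \<omega> \<partial>M \<partial>count_space (trajectories K x0 n))"
proof -
  have "(\<integral>\<^sup>+\<omega>. f \<omega> \<partial>M) = (\<integral>\<^sup>+\<omega>. f \<omega> * indicator (space M) \<omega> \<partial>M)"
    by (rule nn_integral_cong) simp
  also have "\<dots> = (\<integral>\<^sup>+h. \<integral>\<^sup>+\<omega>. f \<omega> * indicator (cylinder n h) \<omega> \<partial>M \<partial>count_space (trajectories K x0 n))"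
  proof (rule nn_integral_indicator_partition_AE[OF countable_trajectories])
    show "disjoint_family_on (cylinder n) (trajectories K x0 n)"
      unfolding disjoint_family_on_def
    proof (intro ballI impI)
      fix h h' assume "h \<in> trajectories K x0 n" "h' \<in> trajectories K x0 n" "h \<noteq> h'"
      then show "cylinder n h \<inter> cylinder n h' = {}"
        using history_eq_iff_cylinder[of h n] history_eq_iff_cylinder[of h' n]
          sets.sets_into_space[OF sets_cylinder]
        by blast
    qed
    show "AE \<omega> in M. \<omega> \<in> space M \<longleftrightarrow> (\<exists>h\<in>trajectories K x0 n. \<omega> \<in> cylinder n h)"
      using AE_history_in_trajectories[of n] AE_space
      by eventually_elim (use history_eq_iff_cylinder sets.sets_into_space[OF sets_cylinder] in blast)
  qed simp_all
  finally show ?thesis .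
qed

lemma nn_integral_cylinder_Suc:
  fixes \<phi> :: "'s \<Rightarrow> ennreal"
  shows "(\<integral>\<^sup>+\<omega>. \<phi> (X (Suc n) \<omega>) * indicator (cylinder n h) \<omega> \<partial>M)
    = emeasure M (cylinder n h) * (\<integral>\<^sup>+x. \<phi> x \<partial>K (h n))"
proof -
  let ?S = "set_pmf (K (h n))" and ?C = "\<lambda>z. cylinder (Suc n) (h(Suc n := z))"
  have "(\<integral>\<^sup>+\<omega>. \<phi> (X (Suc n) \<omega>) * indicator (cylinder n h) \<omega> \<partial>M)
      = (\<integral>\<^sup>+z. \<integral>\<^sup>+\<omega>. \<phi> (X (Suc n) \<omega>) * indicator (?C z) \<omega> \<partial>M \<partial>count_space ?S)"
    by (rule nn_integral_indicator_partition_AE[OF _ _ _ _ AE_cylinder_Suc_cover])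
      (fastforce simp: disjoint_family_on_def cylinder_def)+
  also have "\<dots> = (\<integral>\<^sup>+z. \<phi> z * emeasure M (?C z) \<partial>count_space ?S)"
  proof (rule nn_integral_cong)
    fix z
    have "(\<integral>\<^sup>+\<omega>. \<phi> (X (Suc n) \<omega>) * indicator (?C z) \<omega> \<partial>M) = (\<integral>\<^sup>+\<omega>. \<phi> z * indicator (?C z) \<omega> \<partial>M)"
      by (rule nn_integral_cong) (auto simp: cylinder_def indicator_def)
    then show "(\<integral>\<^sup>+\<omega>. \<phi> (X (Suc n) \<omega>) * indicator (?C z) \<omega> \<partial>M) = \<phi> z * emeasure M (?C z)"
      by (simp add: nn_integral_cmult_indicator)
  qed
  also have "\<dots> = emeasure M (cylinder n h) * (\<integral>\<^sup>+z. ennreal (pmf (K (h n)) z) * \<phi> z \<partial>count_space ?S)"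
    by (simp add: emeasure_eq_measure measure_cylinder_Suc ennreal_mult mult_ac nn_integral_cmult[symmetric])
  also have "(\<integral>\<^sup>+z. ennreal (pmf (K (h n)) z) * \<phi> z \<partial>count_space ?S)
      = (\<integral>\<^sup>+z. ennreal (pmf (K (h n)) z) * \<phi> z * indicator ?S z \<partial>count_space UNIV)"
    by (rule nn_integral_count_space_indicator) (simp add: NO_MATCH_def)
  also have "\<dots> = (\<integral>\<^sup>+z. ennreal (pmf (K (h n)) z) * \<phi> z \<partial>count_space UNIV)"
    by (rule nn_integral_cong) (auto simp: indicator_def set_pmf_eq)
  also have "\<dots> = (\<integral>\<^sup>+x. \<phi> x \<partial>K (h n))"
    by (rule nn_integral_measure_pmf[symmetric])
  finally show ?thesis .
qed

lemma nn_integral_step_le: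
  fixes \<phi> :: "'s \<Rightarrow> ennreal"
  assumes le: "\<And>x. x \<in> reachable K x0 n \<Longrightarrow> (\<integral>\<^sup>+y. \<phi> y \<partial>K x) \<le> \<phi> x"
  shows "(\<integral>\<^sup>+\<omega>. \<phi> (X (Suc n) \<omega>) \<partial>M) \<le> (\<integral>\<^sup>+\<omega>. \<phi> (X n \<omega>) \<partial>M)"
  unfolding nn_integral_split_trajectories[of _ n, OF borel_measurable_comp_X]
proof (rule nn_integral_mono)
  fix h assume "h \<in> space (count_space (trajectories K x0 n))"
  then have "h n \<in> reachable K x0 n"
    by (auto simp: reachable_eq_trajectories)
  then have "(\<integral>\<^sup>+\<omega>. \<phi> (X (Suc n) \<omega>) * indicator (cylinder n h) \<omega> \<partial>M) \<le> emeasure M (cylinder n h) * \<phi> (h n)"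
    unfolding nn_integral_cylinder_Suc by (intro mult_left_mono le) simp_all
  also have "\<dots> = (\<integral>\<^sup>+\<omega>. \<phi> (h n) * indicator (cylinder n h) \<omega> \<partial>M)"
    by (simp add: nn_integral_cmult_indicator mult.commute)
  also have "\<dots> = (\<integral>\<^sup>+\<omega>. \<phi> (X n \<omega>) * indicator (cylinder n h) \<omega> \<partial>M)"
    by (rule nn_integral_cong) (auto simp: cylinder_def indicator_def)
  finally show "(\<integral>\<^sup>+\<omega>. \<phi> (X (Suc n) \<omega>) * indicator (cylinder n h) \<omega> \<partial>M)
      \<le> (\<integral>\<^sup>+\<omega>. \<phi> (X n \<omega>) * indicator (cylinder n h) \<omega> \<partial>M)" .
qed

lemma nn_integral_lt_1_if_reachable:
  fixes \<phi> :: "'s \<Rightarrow> ennreal"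
  assumes le1: "\<And>y. \<phi> y \<le> 1" and x: "x \<in> reachable K x0 n" and lt1: "\<phi> x < 1"
  shows "(\<integral>\<^sup>+\<omega>. \<phi> (X n \<omega>) \<partial>M) < 1"
proof -
  let ?A = "{\<omega> \<in> space M. X n \<omega> = x}"
  obtain r where r: "\<phi> x = ennreal r" "0 \<le> r" "r < 1"
    using lt1 by (cases "\<phi> x") auto
  define p where "p = prob ?A"
  have p: "0 < p" "p \<le> 1"
    using prob_reachable_pos[OF x] by (simp_all add: p_def)
  have "(\<integral>\<^sup>+\<omega>. \<phi> (X n \<omega>) \<partial>M) \<le> (\<integral>\<^sup>+\<omega>. \<phi> x * indicator ?A \<omega> + indicator (space M - ?A) \<omega> \<partial>M)"
    by (rule nn_integral_mono) (auto simp: indicator_def le1)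
  also have "\<dots> = \<phi> x * emeasure M ?A + emeasure M (space M - ?A)"
    by (simp add: nn_integral_add nn_integral_cmult_indicator)
  also have "\<dots> = ennreal (r * p) + ennreal (1 - p)"
    using r by (simp add: emeasure_eq_measure prob_compl p_def ennreal_mult)
  also have "\<dots> = ennreal (r * p + (1 - p))"
    using p r by (intro ennreal_plus[symmetric]) simp_all
  also have "\<dots> < 1"
  proof -
    have "r * p < 1 * p"
      by (rule mult_strict_right_mono) (use p r in auto)
    then show ?thesis by (simp del: ennreal_plus)
  qed
  finally show ?thesis .
qed

end

lemma pmf_kernel_process_GW:
  "is_GW_process M Z i \<Longrightarrow> pmf_kernel_process M GW_kernel (unit_vec 1 i) Z"
  unfolding is_GW_process_def pmf_kernel_process_def pmf_kernel_process_axioms_def by auto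

lemma reachable_GW_finite_support:
  "x \<in> reachable GW_kernel (unit_vec 1 i) n \<Longrightarrow> \<exists>N. \<forall>l\<ge>N. x l = 0"
proof (induction n arbitrary: x)
  case 0
  then show ?case by (auto intro!: exI[of _ "Suc i"])
next
  case (Suc n)
  obtain y where y: "y \<in> reachable GW_kernel (unit_vec 1 i) n" "x \<in> set_pmf (GW_kernel y)"
    using Suc.prems unfolding reachable.simps by (rule UN_E)
  then obtain N where "\<forall>l\<ge>N. y l = 0"
    using Suc.IH by blast
  then show ?case
    using GW_kernel_finite_support y(2) by blast
qed

lemma reachable_GW_single_type:
  "11 \<le> i \<Longrightarrow> x \<in> reachable GW_kernel (unit_vec 1 i) n \<Longrightarrow> \<exists>c. x = unit_vec c (i + n)"
proof (induction n arbitrary: x)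
  case 0
  then show ?case by auto
next
  case (Suc n)
  obtain y where y: "y \<in> reachable GW_kernel (unit_vec 1 i) n" "x \<in> set_pmf (GW_kernel y)"
    using Suc.prems(2) unfolding reachable.simps by (rule UN_E)
  then obtain c where "y = unit_vec c (i + n)"
    using Suc.IH Suc.prems(1) by blast
  with y(2) have "x \<in> set_pmf (GW_kernel (unit_vec c (i + n)))"
    by simp
  then have "x = unit_vec (x (Suc (i + n))) (Suc (i + n))"
    by (rule GW_kernel_unit_vec_support) (use Suc.prems(1) in simp)
  then show ?case
    unfolding add_Suc_right by blast
qed

lemma unit_vec_reachable_GW:
  "i + n \<le> 10 \<Longrightarrow> unit_vec (3 ^ n) (i + n) \<in> reachable GW_kernel (unit_vec 1 i) n"
proof (induction n)
  case 0
  then show ?case by simp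
next
  case (Suc n)
  have IH: "unit_vec (3 ^ n) (i + n) \<in> reachable GW_kernel (unit_vec 1 i) n"
    using Suc.prems by (intro Suc.IH) simp
  have "unit_vec (3 ^ Suc n) (i + Suc n) \<in> set_pmf (GW_kernel (unit_vec (3 ^ n) (i + n)))"
    using Suc.prems by (simp add: GW_kernel_unit_vec unit_vec_in_set_pmf_conv_pow_offspring)
  then show ?case
    unfolding reachable.simps by (rule UN_I[OF IH])
qed

lemma partial_extinction_eq:
  "partial_extinction M Z = {\<omega> \<in> space M. \<forall>l. \<exists>N. \<forall>n\<ge>N. Z n \<omega> l = 0}"
  by (simp only: partial_extinction_def tendsto_discrete eventually_sequentially)

lemma sets_Collect_eventually:
  fixes P :: "nat \<Rightarrow> 'a \<Rightarrow> bool"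
  assumes "\<And>n. {\<omega> \<in> space M. P n \<omega>} \<in> sets M"
  shows "{\<omega> \<in> space M. \<exists>N. \<forall>n\<ge>N. P n \<omega>} \<in> sets M"
  by (rule sets.sets_Collect_countable_Ex, rule sets.sets_Collect_countable_All,
      rule sets.sets_Collect_imp, rule assms, rule sets.sets_Collect_const)

lemma emeasure_eventually_le:
  fixes P :: "nat \<Rightarrow> 'a \<Rightarrow> bool"
  assumes sets: "\<And>n. {\<omega> \<in> space M. P n \<omega>} \<in> sets M"
    and le: "\<And>n. n0 \<le> n \<Longrightarrow> emeasure M {\<omega> \<in> space M. P n \<omega>} \<le> c"
  shows "emeasure M {\<omega> \<in> space M. \<exists>N. \<forall>n\<ge>N. P n \<omega>} \<le> c"
proof -
  define D where "D N = {\<omega> \<in> space M. \<forall>n\<ge>N. P n \<omega>}" for N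
  have sets_D: "D N \<in> sets M" for N
    unfolding D_def
    by (rule sets.sets_Collect_countable_All, rule sets.sets_Collect_imp, rule sets, rule sets.sets_Collect_const)
  have lim: "(\<lambda>N. emeasure M (D N)) \<longlonglongrightarrow> emeasure M (\<Union>N. D N)"
  proof (rule Lim_emeasure_incseq)
    show "range D \<subseteq> sets M"
      using sets_D by blast
    show "incseq D"
      by (rule incseq_SucI) (auto simp: D_def)
  qed
  have le_c: "emeasure M (D N) \<le> c" for N
  proof -
    have "emeasure M (D N) \<le> emeasure M {\<omega> \<in> space M. P (max N n0) \<omega>}"
      by (rule emeasure_mono) (auto simp: D_def intro: sets)
    also have "\<dots> \<le> c" by (rule le) simp
    finally show ?thesis .
  qed
  have "emeasure M (\<Union>N. D N) \<le> c"
    by (rule LIMSEQ_le_const2[OF lim]) (use le_c in auto)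
  moreover have "(\<Union>N. D N) = {\<omega> \<in> space M. \<exists>N. \<forall>n\<ge>N. P n \<omega>}"
    by (auto simp: D_def)
  ultimately show ?thesis by simp
qed

lemma GW_partial_extinction_eq_1:
  assumes GW: "is_GW_process M Z i" and i: "11 \<le> i"
  shows "measure M (partial_extinction M Z) = 1"
proof -
  interpret pmf_kernel_process M GW_kernel "unit_vec 1 i" Z
    using GW by (rule pmf_kernel_process_GW)
  have "AE \<omega> in M. \<forall>l. \<exists>N. \<forall>n\<ge>N. Z n \<omega> l = 0"
    using AE_X_reachable
  proof eventually_elim
    case (elim \<omega>)
    have zero: "Z n \<omega> l = 0" if "l < n" for l n
    proof -
      obtain c where "Z n \<omega> = unit_vec c (i + n)"
        using reachable_GW_single_type[OF i] elim by blast
      with that show ?thesis by simp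
    qed
    show ?case
    proof
      fix l
      show "\<exists>N. \<forall>n\<ge>N. Z n \<omega> l = 0"
        using zero by (intro exI[of _ "Suc l"]) auto
    qed
  qed
  moreover have "{\<omega> \<in> space M. \<forall>l. \<exists>N. \<forall>n\<ge>N. Z n \<omega> l = 0} \<in> sets M"
    by (rule sets.sets_Collect_countable_All, rule sets_Collect_eventually) measurable
  ultimately show ?thesis
    unfolding partial_extinction_eq by (subst prob_Collect_eq_1) simp_all
qed

lemma GW_emeasure_type10_zero_bounded:
  assumes GW: "is_GW_process M Z i" and i: "i \<le> 10"
  obtains c where "c < 1" "\<And>n. 10 - i \<le> n \<Longrightarrow> emeasure M {\<omega> \<in> space M. Z n \<omega> 10 = 0} \<le> c"
proof
  interpret pmf_kernel_process M GW_kernel "unit_vec 1 i" Z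
    using GW by (rule pmf_kernel_process_GW)
  define W where "W n = (\<integral>\<^sup>+\<omega>. type10_weight (Z n \<omega>) \<partial>M)" for n
  have "decseq W"
    unfolding W_def
    by (intro decseq_SucI nn_integral_step_le nn_integral_GW_kernel_type10_weight
        reachable_GW_finite_support)
  show "W (10 - i) < 1"
    unfolding W_def
  proof (rule nn_integral_lt_1_if_reachable[OF type10_weight_le_1 unit_vec_reachable_GW])
    show "i + (10 - i) \<le> 10"
      using i by simp
    show "type10_weight (unit_vec (3 ^ (10 - i)) (i + (10 - i))) < 1"
      using i by (simp add: type10_weight_def power_less_one_iff)
  qed
  fix n assume "10 - i \<le> n"
  have "emeasure M {\<omega> \<in> space M. Z n \<omega> 10 = 0} = (\<integral>\<^sup>+\<omega>. indicator {\<omega> \<in> space M. Z n \<omega> 10 = 0} \<omega> \<partial>M)"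
    by (rule nn_integral_indicator[symmetric]) measurable
  also have "\<dots> \<le> W n"
    unfolding W_def by (rule nn_integral_mono) (simp add: indicator_def type10_weight_def)
  also have "\<dots> \<le> W (10 - i)"
    using \<open>decseq W\<close> \<open>10 - i \<le> n\<close> by (simp add: decseqD)
  finally show "emeasure M {\<omega> \<in> space M. Z n \<omega> 10 = 0} \<le> W (10 - i)" .
qed

lemma GW_partial_extinction_lt_1:
  assumes GW: "is_GW_process M Z i" and i: "i \<le> 10"
  shows "measure M (partial_extinction M Z) < 1"
proof -
  interpret pmf_kernel_process M GW_kernel "unit_vec 1 i" Z
    using GW by (rule pmf_kernel_process_GW)
  have sets_Z10: "{\<omega> \<in> space M. Z n \<omega> 10 = 0} \<in> sets M" for n
    by measurable
  obtain c where "c < 1" and c: "\<And>n. 10 - i \<le> n \<Longrightarrow> emeasure M {\<omega> \<in> space M. Z n \<omega> 10 = 0} \<le> c"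
    using GW_emeasure_type10_zero_bounded[OF GW i] by blast
  have "emeasure M (partial_extinction M Z) \<le> emeasure M {\<omega> \<in> space M. \<exists>N. \<forall>n\<ge>N. Z n \<omega> 10 = 0}"
    by (rule emeasure_mono) (auto simp: partial_extinction_eq intro: sets_Collect_eventually sets_Z10)
  also have "\<dots> \<le> c"
    by (rule emeasure_eventually_le[OF sets_Z10 c])
  finally have "emeasure M (partial_extinction M Z) < 1"
    using \<open>c < 1\<close> by (rule le_less_trans)
  then show ?thesis
    by (simp add: emeasure_eq_measure)
qed

theorem mainTheorem12:
  shows "(\<lambda>k. spectral_radius (trunc_mean k)) \<longlonglongrightarrow> 8/5 \<and> (8/5 :: real) > 1
    \<and> (\<forall>(M :: 'a measure) Z i. is_GW_process M Z i \<and> 1 \<le> i \<and> i \<le> 10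
          \<longrightarrow> measure M (partial_extinction M Z) < 1)
    \<and> (\<forall>(M :: 'a measure) Z i. is_GW_process M Z i \<and> 11 \<le> i
          \<longrightarrow> measure M (partial_extinction M Z) = 1)"
  using spectral_radius_trunc_mean_limit GW_partial_extinction_lt_1 GW_partial_extinction_eq_1
  by auto

end
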